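(* Let $n\geq 2$, $\sigma\in S_n$ and $I\sqcup J=[2,n]$. If $A^\sigma_{[2,n],\emptyset}=A^{\mathrm{id}}_{I,J}$, then $A^{\rho\sigma}_{[2,n],\emptyset}=A^{\rho}_{I,J}$ for every $\rho\in S_n$.
   Context: Let $w_{ij}$, $1\leq i,j\leq n$, be formal variables subject only to $w_{ij}+w_{ji}=0$. Let $[2,n]=\{2,\dots,n\}$. For $\sigma\in S_n$ and a disjoint decomposition $I\sqcup J=[2,n]$, set $$A^\sigma_{I,J}:=\sum_{i\in I}\sum_{\ell=1}^{i-1}w_{\sigma(\ell)\sigma(i)}-\sum_{j\in J}\sum_{\ell=1}^{j-1}w_{\sigma(\ell)\sigma(j)}.$$ Permutations are composed right-to-left: $(\rho\sigma)(k)=\rho(\sigma(k))$. *)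

theory Defs
  imports "HOL-Combinatorics.Permutations" "HOL-Library.Function_Algebras"
begin

text \<open>The formal variables w_ij subject only to w_ij + w_ji = 0 are modelled as
  elements of the free abelian group on the pairs (i,j) with i < j, represented by
  integer coefficient functions on nat \<times> nat. The variable w_ab is the basis vector
  at (a,b) if a < b and minus the basis vector at (b,a) if b < a (and 0 if a = b).\<close>

definition wvar :: "nat \<Rightarrow> nat \<Rightarrow> (nat \<times> nat \<Rightarrow> int)" where
  "wvar a b = (\<lambda>p. if a < b \<and> p = (a, b) then 1
                    else if b < a \<and> p = (b, a) then -1 else 0)"

definition Aexpr :: "(nat \<Rightarrow> nat) \<Rightarrow> nat set \<Rightarrow> nat set \<Rightarrow> (nat \<times> nat \<Rightarrow> int)" where
  "Aexpr \<sigma> I J =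
     (\<Sum>i\<in>I. \<Sum>l\<in>{1..<i}. wvar (\<sigma> l) (\<sigma> i))
   - (\<Sum>j\<in>J. \<Sum>l\<in>{1..<j}. wvar (\<sigma> l) (\<sigma> j))"

end

theory Submission
  imports Defs
begin

text \<open>The substitution \<open>w(a,b) \<mapsto> w(\<rho> a, \<rho> b)\<close> extends to an endomorphism of the
  abelian group generated by the variables, and it sends \<open>A\<^sup>\<sigma>(I,J)\<close> to \<open>A\<^sup>\<rho>\<^sup>\<sigma>(I,J)\<close>.
  Applying it to both sides of \<open>A\<^sup>\<sigma>([2,n],\<emptyset>) = A\<^sup>i\<^sup>d(I,J)\<close> gives the claim; nothing
  about \<open>\<rho>\<close> beyond being a function is needed.\<close>

text \<open>Only coefficients at pairs in \<open>S \<times> S\<close> are read, which suffices for all expressions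
  built from variables with indices in \<open>S\<close>.\<close>

definition relabel :: "(nat \<Rightarrow> nat) \<Rightarrow> nat set \<Rightarrow> (nat \<times> nat \<Rightarrow> int) \<Rightarrow> (nat \<times> nat \<Rightarrow> int)" where
  "relabel \<rho> S f = (\<lambda>q. \<Sum>p\<in>S \<times> S. f p * wvar (\<rho> (fst p)) (\<rho> (snd p)) q)"

lemma relabel_wvar:
  assumes "finite S" "x \<in> S" "y \<in> S"
  shows "relabel \<rho> S (wvar x y) = wvar (\<rho> x) (\<rho> y)"
proof (rule ext)
  fix q
  consider "x < y" | "y < x" | "x = y" by linarith
  then show "relabel \<rho> S (wvar x y) q = wvar (\<rho> x) (\<rho> y) q"
  proof cases
    case 1
    have "relabel \<rho> S (wvar x y) q
        = (\<Sum>p\<in>S \<times> S. if p = (x, y) then wvar (\<rho> (fst p)) (\<rho> (snd p)) q else 0)"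
      unfolding relabel_def using 1 by (intro sum.cong) (auto simp: wvar_def)
    also have "\<dots> = wvar (\<rho> x) (\<rho> y) q" using assms by (subst sum.delta) auto
    finally show ?thesis .
  next
    case 2
    have "relabel \<rho> S (wvar x y) q
        = (\<Sum>p\<in>S \<times> S. if p = (y, x) then - wvar (\<rho> (fst p)) (\<rho> (snd p)) q else 0)"
      unfolding relabel_def using 2 by (intro sum.cong) (auto simp: wvar_def)
    also have "\<dots> = - wvar (\<rho> y) (\<rho> x) q" using assms by (subst sum.delta) auto
    also have "\<dots> = wvar (\<rho> x) (\<rho> y) q" by (simp add: wvar_def)
    finally show ?thesis .
  next
    case 3
    then show ?thesis unfolding relabel_def by (simp add: wvar_def)
  qed
qed

lemma relabel_diff: "relabel \<rho> S (f - g) = relabel \<rho> S f - relabel \<rho> S g"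
  unfolding relabel_def by (rule ext) (simp add: left_diff_distrib sum_subtractf)

lemma sum_apply: "(\<Sum>i\<in>A. g i) x = (\<Sum>i\<in>A. g i x)"
  by (induction A rule: infinite_finite_induct) auto

lemma relabel_sum: "relabel \<rho> S (\<Sum>i\<in>A. g i) = (\<Sum>i\<in>A. relabel \<rho> S (g i))"
  unfolding relabel_def
  by (rule ext) (simp add: sum_apply sum_distrib_right sum.swap[of _ A])

lemma relabel_Aexpr:
  assumes "f ` {1..n} \<subseteq> S" "finite S" "I \<subseteq> {..n}" "J \<subseteq> {..n}"
  shows "relabel \<rho> S (Aexpr f I J) = Aexpr (\<rho> \<circ> f) I J"
proof -
  have relabel_inner_sums: "relabel \<rho> S (\<Sum>i\<in>K. \<Sum>l\<in>{1..<i}. wvar (f l) (f i))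
      = (\<Sum>i\<in>K. \<Sum>l\<in>{1..<i}. wvar ((\<rho> \<circ> f) l) ((\<rho> \<circ> f) i))" if "K \<subseteq> {..n}" for K
  proof -
    have "relabel \<rho> S (wvar (f l) (f i)) = wvar (\<rho> (f l)) (\<rho> (f i))"
      if "i \<in> K" "l \<in> {1..<i}" for i l
    proof -
      have "l \<in> {1..n}" "i \<in> {1..n}"
        using that \<open>K \<subseteq> {..n}\<close> by auto
      then show ?thesis
        using assms(1,2) by (intro relabel_wvar) auto
    qed
    then show ?thesis
      by (simp add: relabel_sum)
  qed
  show ?thesis
    unfolding Aexpr_def relabel_diff using relabel_inner_sums assms(3,4) by simp
qed

theorem lemma3p6:
  fixes n :: nat and \<sigma> :: "nat \<Rightarrow> nat" and I J :: "nat set"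
  assumes "n \<ge> 2"
    and "\<sigma> permutes {1..n}"
    and "I \<union> J = {2..n}" and "I \<inter> J = {}"
    and "Aexpr \<sigma> {2..n} {} = Aexpr id I J"
  shows "\<forall>\<rho>. \<rho> permutes {1..n} \<longrightarrow> Aexpr (\<rho> \<circ> \<sigma>) {2..n} {} = Aexpr \<rho> I J"
proof (intro allI impI)
  fix \<rho> :: "nat \<Rightarrow> nat"
  have \<sigma>_range: "\<sigma> ` {1..n} \<subseteq> {1..n}"
    using permutes_image[OF assms(2)] by simp
  have IJ: "I \<subseteq> {..n}" "J \<subseteq> {..n}"
    using assms(3) by auto
  have "Aexpr (\<rho> \<circ> \<sigma>) {2..n} {} = relabel \<rho> {1..n} (Aexpr \<sigma> {2..n} {})"
    using relabel_Aexpr[OF \<sigma>_range, of "{2..n}" "{}" \<rho>] by simp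
  also have "\<dots> = relabel \<rho> {1..n} (Aexpr id I J)"
    using assms(5) by simp
  also have "\<dots> = Aexpr \<rho> I J"
    using relabel_Aexpr[of id n "{1..n}" I J \<rho>] IJ by simp
  finally show "Aexpr (\<rho> \<circ> \<sigma>) {2..n} {} = Aexpr \<rho> I J" .
qed

end
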